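(* The dynamical system $(X,T)$ is proximal, i.e. every pair $x,y\in X$ satisfies $\liminf_{n\to\infty}d(T^n(x),T^n(y))=0$.
   Context: Paths and cycles: a graph is $G=(V,E)$ with $V$ finite and $E\subset V\times V$. A path is a finite sequence of vertices $(u_0,\dots,u_L)$ with $(u_j,u_{j+1})\in E$; its length is $|\cdot|=L$; a cycle is a path with $u_0=u_L$. For paths where one ends where the next starts, $+$ denotes concatenation and $a\,c$ means the cycle $c$ traversed $a$ times. Construction: $G_0=(V_0,E_0)$ with $V_0=\{v_{0,0}\}$, $E_0=\{e_{0,0}\}$, $e_{0,0}=(v_{0,0},v_{0,0})$. For $n\geq1$, $G_n=(V_n,E_n)$ consists of a vertex $v_{n,0}$, the loop $e_{n,0}=(v_{n,0},v_{n,0})$, and $n$ cycles $c_{n,1},\dots,c_{n,n}$, each starting and ending at $v_{n,0}$, whose vertices other than $v_{n,0}$ are pairwise distinct (within each cycle and across cycles); $V_n$ is the set of all these vertices and $E_n$ consists of $e_{n,0}$ and the edges of the cycles. The maps $\varphi_n\colon V_{n+1}\to V_n$ and the lengths of the cycles $c_{n+1,i}$ are defined together: $\varphi_n(v_{n+1,0})=v_{n,0}$, and for each $i$ a path $P_{n,i}$ in $G_n$ from $v_{n,0}$ to $v_{n,0}$ is given; $c_{n+1,i}$ has length $|P_{n,i}|$ and $\varphi_n$ maps its $j$-th vertex to the $j$-th vertex of $P_{n,i}$ (written $\varphi_n(c_{n+1,i})=P_{n,i}$). The paths are: $P_{0,1}=10\,e_{0,0}$; for $n\geq1$: $P_{n,i}=e_{n,0}+2c_{n,i}+2c_{n,i+1}+\dots+2c_{n,n}+e_{n,0}$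 for $2\leq i\leq n$; $P_{n,n+1}=(n+2)^2\big(\sum_{i=1}^n|c_{n,i}|\big)\,e_{n,0}$; and $P_{n,1}=(1\,e_{n,0}+2c_{n,1})+(2\,e_{n,0}+2c_{n,1})+\dots+(k_n\,e_{n,0}+2c_{n,1})+e_{n,0}+2c_{n,2}+\dots+2c_{n,n}+e_{n,0}$, where $k_n=2\big(1+\sum_{i=1}^n|c_{n,i}|\big)$. Let $X=\{x\in\prod_{n\geq0}V_n:\varphi_n(x_{n+1})=x_n\ \forall n\}$ with metric $d(x,y)=2^{-\min\{i:x_i\neq y_i\}}$ ($d(x,x)=0$); $X$ is a compact zero-dimensional metric space, and $T\colon X\to X$ defined by $T(x)=y$ iff $(x_n,y_n)\in E_n$ for all $n$ is a well-defined homeomorphism. Write $x_n$ for the $n$-th coordinate of $x$. *)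

theory Defs
  imports "HOL-Library.Extended_Real" "HOL-Library.Liminf_Limsup"
begin

text \<open>Vertices of G_n are encoded as pairs of naturals: (0,0) is the base vertex v_{n,0};
  (i,j) with 1 \<le> i \<le> n and 1 \<le> j < |c_{n,i}| is the j-th vertex of the cycle c_{n,i}.
  Paths are nonempty vertex lists; the length of a path p is length p - 1.\<close>

type_synonym vert = "nat \<times> nat"
type_synonym path = "vert list"

definition base :: vert where "base = (0,0)"

text \<open>concatenation of paths (the second starts where the first ends)\<close>
definition pcat :: "path \<Rightarrow> path \<Rightarrow> path" where
  "pcat p q = p @ tl q"

fun pseq :: "path list \<Rightarrow> path" where
  "pseq [] = [base]"
| "pseq (p # ps) = pcat p (pseq ps)"

definition prep :: "nat \<Rightarrow> path \<Rightarrow> path" where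
  "prep a c = pseq (replicate a c)"

definition loop :: path where "loop = [base, base]"

definition cyc :: "nat \<Rightarrow> nat \<Rightarrow> path" where
  "cyc L i = map (\<lambda>j. if j = 0 \<or> j = L then base else (i, j)) [0..<L+1]"

text \<open>The paths P_{n,i} in G_n, given the lengths L k = |c_{n,k}| of the cycles of G_n.\<close>
definition Ppath :: "(nat \<Rightarrow> nat) \<Rightarrow> nat \<Rightarrow> nat \<Rightarrow> path" where
  "Ppath L n i =
    (let S = (\<Sum>k=1..n. L k); kn = 2 * (1 + S) in
     if n = 0 then (if i = 1 then prep 10 loop else [base])
     else if i = n + 1 then prep ((n+2)^2 * S) loop
     else if 2 \<le> i \<and> i \<le> n then
       pseq ([loop] @ map (\<lambda>k. prep 2 (cyc (L k) k)) [i..<n+1] @ [loop])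
     else if i = 1 then
       pseq (concat (map (\<lambda>m. [prep m loop, prep 2 (cyc (L 1) 1)]) [1..<kn+1])
             @ [loop] @ map (\<lambda>k. prep 2 (cyc (L k) k)) [2..<n+1] @ [loop])
     else [base])"

text \<open>lens n i = |c_{n,i}| (for 1 \<le> i \<le> n)\<close>
primrec lens :: "nat \<Rightarrow> nat \<Rightarrow> nat" where
  "lens 0 i = 0"
| "lens (Suc n) i = length (Ppath (lens n) n i) - 1"

definition cycle :: "nat \<Rightarrow> nat \<Rightarrow> path" where
  "cycle n i = cyc (lens n i) i"

definition V :: "nat \<Rightarrow> vert set" where
  "V n = {base} \<union> {(i, j). 1 \<le> i \<and> i \<le> n \<and> 1 \<le> j \<and> j < lens n i}"

definition E :: "nat \<Rightarrow> (vert \<times> vert) set" where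
  "E n = {(base, base)} \<union> (\<Union>i\<in>{1..n}. set (zip (cycle n i) (tl (cycle n i))))"

definition phi :: "nat \<Rightarrow> vert \<Rightarrow> vert" where
  "phi n v = (if v = base then base else Ppath (lens n) n (fst v) ! snd v)"

definition X :: "(nat \<Rightarrow> vert) set" where
  "X = {x. (\<forall>n. x n \<in> V n) \<and> (\<forall>n. phi n (x (Suc n)) = x n)}"

definition d :: "(nat \<Rightarrow> vert) \<Rightarrow> (nat \<Rightarrow> vert) \<Rightarrow> real" where
  "d x y = (if x = y then 0 else (1/2) ^ (LEAST i. x i \<noteq> y i))"

definition T :: "(nat \<Rightarrow> vert) \<Rightarrow> (nat \<Rightarrow> vert)" where
  "T x = (THE y. y \<in> X \<and> (\<forall>n. (x n, y n) \<in> E n))"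

end

theory Submission
  imports Defs "HOL-Library.Sublist"
begin

text \<open>Write S_n for the sum of the lengths |c_{n,i}| (total_length n below). If a point is at
  v_{n,0} on level n, it is at the base vertex on all lower levels, so two points that are at
  v_{n,0} at the same time are 2^-(n+1)-close. Every orbit returns to v_{n,0} within S_n steps.
  Conversely, every orbit infinitely often stays at v_{n,0} for S_n + 1 consecutive steps:
  whenever it enters a cycle c_{n+2,j}, its level-(n+1) coordinate runs through P_{n+1,j}, which
  either is a run of loops longer than S_n or traverses c_{n+1,n+1}, and c_{n+1,n+1} is mapped
  onto the run of loops P_{n,n+1}, of length at least S_n. During such a stretch the orbit of
  any other point visits v_{n,0}, and at that moment the two points are 2^-(n+1)-close.\<close>

section \<open>Closed walks and the paths P_{n,i}\<close>

definition closed_path :: "path \<Rightarrow> bool" where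
  "closed_path p \<longleftrightarrow> p \<noteq> [] \<and> hd p = base \<and> last p = base"

definition closed_walk :: "nat \<Rightarrow> path \<Rightarrow> bool" where
  "closed_walk n p \<longleftrightarrow> closed_path p \<and> successively (\<lambda>a b. (a, b) \<in> E n) p \<and> set p \<subseteq> V n"

lemma base_in_V [simp]: "base \<in> V n"
  by (simp add: V_def)

lemma base_base_in_E [simp]: "(base, base) \<in> E n"
  by (simp add: E_def)

lemma closed_path_pcat: "closed_path p \<Longrightarrow> closed_path q \<Longrightarrow> closed_path (pcat p q)"
  unfolding closed_path_def pcat_def by (cases q) (auto simp: last_append)

lemma closed_path_pseq: "(\<And>p. p \<in> set ps \<Longrightarrow> closed_path p) \<Longrightarrow> closed_path (pseq ps)"
  by (induction ps) (simp_all add: closed_path_def[of "[base]"] closed_path_pcat)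

lemma closed_path_prep: "closed_path c \<Longrightarrow> closed_path (prep a c)"
  unfolding prep_def by (rule closed_path_pseq) auto

lemma closed_path_loop: "closed_path loop"
  by (simp add: closed_path_def loop_def)

lemma length_cyc [simp]: "length (cyc L i) = Suc L"
  by (simp add: cyc_def)

lemma nth_cyc: "s \<le> L \<Longrightarrow> cyc L i ! s = (if s = 0 \<or> s = L then base else (i, s))"
  unfolding cyc_def by (simp del: upt_Suc add: nth_append)

lemma closed_path_cyc: "closed_path (cyc L i)"
proof -
  have "cyc L i \<noteq> []" using length_cyc[of L i] by (metis list.size(3) nat.distinct(1))
  then show ?thesis
    by (simp add: closed_path_def hd_conv_nth last_conv_nth nth_cyc)
qed

lemma prep_loop: "prep a loop = replicate (Suc a) base"
  unfolding prep_def by (induction a) (auto simp: loop_def pcat_def)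

lemma closed_walk_pcat:
  assumes "closed_walk n p" "closed_walk n q"
  shows "closed_walk n (pcat p q)"
proof -
  obtain qs where q: "q = base # qs"
    using assms(2) unfolding closed_walk_def closed_path_def by (cases q) auto
  have "successively (\<lambda>a b. (a, b) \<in> E n) (p @ qs)"
    using assms q unfolding closed_walk_def closed_path_def
    by (auto simp: successively_append_iff successively_Cons)
  moreover have "closed_path (pcat p q)"
    using assms closed_path_pcat by (simp add: closed_walk_def)
  ultimately show ?thesis
    using assms q by (auto simp: closed_walk_def pcat_def)
qed

lemma closed_walk_base: "closed_walk n [base]"
  by (simp add: closed_walk_def closed_path_def)

lemma closed_walk_pseq: "(\<And>p. p \<in> set ps \<Longrightarrow> closed_walk n p) \<Longrightarrow> closed_walk n (pseq ps)"
  by (induction ps) (simp_all add: closed_walk_base closed_walk_pcat)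

lemma closed_walk_prep: "closed_walk n c \<Longrightarrow> closed_walk n (prep a c)"
  unfolding prep_def by (rule closed_walk_pseq) auto

lemma closed_walk_loop: "closed_walk n loop"
  by (simp add: closed_walk_def closed_path_def loop_def)

lemma cyc_edge_in_E:
  assumes "s < lens n i" "1 \<le> i" "i \<le> n"
  shows "(cyc (lens n i) i ! s, cyc (lens n i) i ! Suc s) \<in> E n"
proof -
  have "(cyc (lens n i) i ! s, cyc (lens n i) i ! Suc s) \<in> set (zip (cycle n i) (tl (cycle n i)))"
    using assms unfolding set_zip cycle_def by (auto simp: nth_tl intro!: exI[of _ s])
  with assms show ?thesis unfolding E_def by auto
qed

lemma closed_walk_cyc:
  assumes "1 \<le> i" "i \<le> n"
  shows "closed_walk n (cyc (lens n i) i)"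
proof -
  let ?c = "cyc (lens n i) i"
  have "successively (\<lambda>a b. (a, b) \<in> E n) ?c"
    using assms by (auto simp: successively_conv_nth intro!: cyc_edge_in_E)
  moreover have "set ?c \<subseteq> V n"
  proof
    fix v assume "v \<in> set ?c"
    then obtain s where "s \<le> lens n i" "v = ?c ! s"
      by (auto simp: in_set_conv_nth less_Suc_eq_le)
    with assms show "v \<in> V n" by (auto simp: nth_cyc V_def)
  qed
  ultimately show ?thesis by (simp add: closed_walk_def closed_path_cyc)
qed

lemma closed_walk_Ppath: "closed_walk n (Ppath (lens n) n i)"
  unfolding Ppath_def Let_def
  by (auto intro!: closed_walk_pseq closed_walk_prep closed_walk_loop closed_walk_cyc
      closed_walk_base simp del: upt_Suc pseq.simps)

lemma sublist_pseq:
  assumes "\<And>p. p \<in> set ps \<Longrightarrow> closed_path p" and "c \<in> set ps"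
  shows "sublist c (pseq ps)"
  using assms
proof (induction ps)
  case Nil then show ?case by simp
next
  case (Cons a ps)
  show ?case
  proof (cases "c = a")
    case True then show ?thesis by (simp add: pcat_def)
  next
    case False
    then obtain A B where AB: "pseq ps = A @ c @ B"
      using Cons by (auto simp: sublist_def)
    have a: "a = butlast a @ [base]" and c: "c = base # tl c"
      using Cons.prems False unfolding closed_path_def
      by (metis append_butlast_last_id list.set_intros(1), metis list.collapse set_ConsD)
    show ?thesis
    proof (cases A)
      case Nil
      have "a @ tl c = butlast a @ c"
        using a c by (metis append.assoc append_Cons append_Nil)
      moreover have "tl (c @ B) = tl c @ B"
        using c by (metis append_Cons list.sel(3))
      ultimately have "pseq (a # ps) = butlast a @ c @ B"
        using AB Nil by (simp add: pcat_def)
      then show ?thesis by simp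
    next
      case (Cons a' A')
      then have "pseq (a # ps) = (a @ A') @ c @ B" using AB by (simp add: pcat_def)
      then show ?thesis by (metis sublist_appendI)
    qed
  qed
qed

lemma sublist_cyc_Ppath:
  assumes "1 \<le> j" "j \<le> m"
  shows "sublist (cyc (L m) m) (Ppath L m j)"
proof -
  let ?f = "\<lambda>k. prep 2 (cyc (L k) k)"
  let ?S = "\<Sum>k=1..m. L k"
  have via_pseq: "sublist (cyc (L m) m) (pseq ps)"
    if "\<And>p. p \<in> set ps \<Longrightarrow> closed_path p" "?f m \<in> set ps" for ps
  proof -
    have "sublist (cyc (L m) m) (?f m)"
      unfolding prep_def by (rule sublist_pseq) (auto simp: closed_path_cyc numeral_2_eq_2)
    then show ?thesis using sublist_pseq[OF that] by (rule sublist_order.order.trans)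
  qed
  show ?thesis
  proof (cases "j = 1")
    case True
    let ?ps = "concat (map (\<lambda>i. [prep i loop, ?f 1]) [1..<2 * (1 + ?S) + 1])
             @ [loop] @ map ?f [2..<m+1] @ [loop]"
    have "1 \<in> set [1..<2 * (1 + ?S) + 1]" by (simp only: set_upt) simp
    moreover have "?f 1 \<in> set [prep 1 loop, ?f 1]" by simp
    ultimately have "?f 1 \<in> set (concat (map (\<lambda>i. [prep i loop, ?f 1]) [1..<2 * (1 + ?S) + 1]))"
      unfolding set_concat set_map by blast
    moreover have "?f m \<in> set (map ?f [2..<m+1])" if "m \<noteq> 1"
      using that assms by (simp del: upt_Suc)
    ultimately have mem: "?f m \<in> set ?ps"
      by (cases "m = 1") (simp_all only: set_append Un_iff simp_thms)
    have closed: "closed_path p" if "p \<in> set ?ps" for p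
      using that by (auto simp: closed_path_prep closed_path_loop closed_path_cyc
          simp del: upt_Suc)
    have "Ppath L m j = pseq ?ps"
      unfolding Ppath_def Let_def using True assms by (simp del: upt_Suc)
    then show ?thesis using via_pseq[OF closed mem] by simp
  next
    case False
    then show ?thesis
      unfolding Ppath_def Let_def using assms
      by (auto intro!: via_pseq simp: closed_path_prep closed_path_loop closed_path_cyc
          simp del: upt_Suc pseq.simps)
  qed
qed

lemma Ppath_Suc_self:
  "Ppath L n (Suc n) = replicate (Suc (if n = 0 then 10 else (n+2)^2 * (\<Sum>k=1..n. L k))) base"
  unfolding Ppath_def Let_def by (auto simp: prep_loop eval_nat_numeral)

text \<open>Every P_{n,i} starts with the loop e_{n,0}; this is what makes T well defined when a
  coordinate leaves the base vertex.\<close>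

lemma Ppath_nth_Suc_0:
  assumes "Suc 0 < length (Ppath L n k)"
  shows "Ppath L n k ! Suc 0 = base"
proof (cases "1 \<le> k \<and> k \<le> n")
  case True
  have "\<exists>ps. Ppath L n k = pseq (loop # ps)"
  proof (cases "k = 1")
    case k: True
    define K where "K = 2 * (1 + (\<Sum>k=1..n. L k)) + 1"
    have "[1..<K] = 1 # [2..<K]"
      unfolding K_def by (subst upt_conv_Cons) (simp_all add: numeral_2_eq_2)
    moreover have "prep 1 loop = loop" unfolding prep_loop by (simp add: loop_def)
    ultimately show ?thesis
      using True k unfolding Ppath_def Let_def K_def[symmetric]
      by (simp del: upt_Suc pseq.simps; blast)
  next
    case False
    then show ?thesis
      using True unfolding Ppath_def Let_def by (simp del: upt_Suc pseq.simps; blast)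
  qed
  then show ?thesis by (auto simp: pcat_def loop_def)
next
  case False
  then have "Ppath L n k = replicate (length (Ppath L n k)) base"
    unfolding Ppath_def Let_def by (auto simp: prep_loop)
  then show ?thesis using assms by (metis nth_replicate)
qed

section \<open>The maps phi and T\<close>

definition next_vertex :: "nat \<Rightarrow> vert \<Rightarrow> vert" where
  "next_vertex n v = cyc (lens n (fst v)) (fst v) ! Suc (snd v)"

lemma V_nonbaseE:
  assumes "v \<in> V n" "v \<noteq> base"
  obtains i s where "v = (i, s)" "1 \<le> i" "i \<le> n" "1 \<le> s" "s < lens n i"
  using assms by (auto simp: V_def)

lemma E_cases:
  assumes "(v, w) \<in> E n"
  shows "(v = base \<and> w = base) \<or> (\<exists>i s. 1 \<le> i \<and> i \<le> n \<and> s < lens n i \<and>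
           v = cyc (lens n i) i ! s \<and> w = cyc (lens n i) i ! Suc s)"
  using assms unfolding E_def cycle_def by (fastforce simp: set_zip nth_tl)

lemma E_from_nonbase:
  assumes "v \<noteq> base" "(v, w) \<in> E n"
  shows "w = next_vertex n v"
proof -
  from E_cases[OF assms(2)] assms(1) obtain i s where
    edge: "s < lens n i" "v = cyc (lens n i) i ! s" "w = cyc (lens n i) i ! Suc s"
    by auto
  with assms(1) have "v = (i, s)" by (auto simp: nth_cyc split: if_splits)
  with edge(3) show ?thesis by (simp add: next_vertex_def)
qed

lemma E_from_base:
  assumes "(base, w) \<in> E n"
  shows "w = base \<or> (\<exists>i. w = (i, Suc 0))"
proof -
  have "w = base \<or> (\<exists>i. w = (i, Suc 0))"
    if "1 \<le> i" "s < lens n i" "base = cyc (lens n i) i ! s" "w = cyc (lens n i) i ! Suc s"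
    for i s
  proof -
    have "s = 0" using that by (auto simp: nth_cyc base_def split: if_splits)
    with that show ?thesis by (auto simp: nth_cyc)
  qed
  with E_cases[OF assms] show ?thesis by blast
qed

lemma next_vertex_edge:
  assumes "v \<in> V n" "v \<noteq> base"
  shows "(v, next_vertex n v) \<in> E n"
proof -
  obtain i s where v: "v = (i, s)" "1 \<le> i" "i \<le> n" "1 \<le> s" "s < lens n i"
    using V_nonbaseE[OF assms] .
  then have "v = cyc (lens n i) i ! s" by (simp add: nth_cyc)
  with v cyc_edge_in_E[of s n i] show ?thesis by (simp add: next_vertex_def)
qed

lemma next_vertex_in_V:
  assumes "v \<in> V n" "v \<noteq> base"
  shows "next_vertex n v \<in> V n"
proof -
  obtain i s where v: "v = (i, s)" "1 \<le> i" "i \<le> n" "s < lens n i"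
    using V_nonbaseE[OF assms] by metis
  then have "next_vertex n v \<in> set (cyc (lens n i) i)" by (simp add: next_vertex_def)
  with closed_walk_cyc[OF v(2,3)] show ?thesis by (auto simp: closed_walk_def)
qed

lemma phi_base [simp]: "phi n base = base"
  by (simp add: phi_def)

lemma phi_nth_cyc:
  assumes "1 \<le> j" "s \<le> lens (Suc m) j"
  shows "phi m (cyc (lens (Suc m) j) j ! s) = Ppath (lens m) m j ! s"
proof -
  let ?P = "Ppath (lens m) m j"
  have "?P \<noteq> []" "hd ?P = base" "last ?P = base"
    using closed_walk_Ppath[of m j] by (auto simp: closed_walk_def closed_path_def)
  with assms show ?thesis
    by (auto simp: nth_cyc phi_def base_def hd_conv_nth last_conv_nth)
qed

lemma phi_in_V:
  assumes "v \<in> V (Suc n)"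
  shows "phi n v \<in> V n"
proof (cases "v = base")
  case False
  then obtain i s where v: "v = (i, s)" "s < lens (Suc n) i"
    using V_nonbaseE[OF assms] by metis
  with False have "phi n v \<in> set (Ppath (lens n) n i)" by (simp add: phi_def)
  then show ?thesis using closed_walk_Ppath[of n i] by (auto simp: closed_walk_def)
qed simp

lemma phi_next_vertex_edge:
  assumes "v \<in> V (Suc n)" "v \<noteq> base"
  shows "(phi n v, phi n (next_vertex (Suc n) v)) \<in> E n"
proof -
  obtain i s where v: "v = (i, s)" "1 \<le> i" "s < lens (Suc n) i"
    using V_nonbaseE[OF assms] by metis
  let ?P = "Ppath (lens n) n i"
  have "phi n v = ?P ! s" using v assms(2) by (simp add: phi_def)
  moreover have "phi n (next_vertex (Suc n) v) = ?P ! Suc s"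
    using v phi_nth_cyc[of i "Suc s" n] by (simp add: next_vertex_def)
  moreover have "Suc s < length ?P" using v by simp
  ultimately show ?thesis
    using closed_walk_Ppath[of n i] by (auto simp: closed_walk_def successively_conv_nth)
qed

lemma phi_after_base:
  assumes "v \<in> V (Suc n)" "(base, v) \<in> E (Suc n)"
  shows "phi n v = base"
proof (cases "v = base")
  case False
  with E_from_base[OF assms(2)] obtain i where v: "v = (i, Suc 0)" by auto
  with assms(1) have "Suc 0 < length (Ppath (lens n) n i)" by (auto simp: V_def base_def)
  with v show ?thesis by (simp add: phi_def base_def Ppath_nth_Suc_0)
qed simp

text \<open>On level n a point moves along its cycle; at the base vertex, whether it takes the loop
  or enters a cycle is read off level n + 1.\<close>

definition successor :: "(nat \<Rightarrow> vert) \<Rightarrow> nat \<Rightarrow> vert" where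
  "successor x n =
    (if x n \<noteq> base then next_vertex n (x n)
     else if x (Suc n) \<noteq> base then phi n (next_vertex (Suc n) (x (Suc n)))
     else base)"

lemma X_in_V: "x \<in> X \<Longrightarrow> x n \<in> V n"
  by (simp add: X_def)

lemma X_phi: "x \<in> X \<Longrightarrow> phi n (x (Suc n)) = x n"
  by (simp add: X_def)

lemma successor_in_V: "x \<in> X \<Longrightarrow> successor x n \<in> V n"
  using X_in_V[of x n] X_in_V[of x "Suc n"]
  by (auto simp: successor_def next_vertex_in_V phi_in_V)

lemma phi_successor:
  assumes x: "x \<in> X"
  shows "phi n (successor x (Suc n)) = successor x n"
proof (cases "x (Suc n) = base")
  case False
  then have succ: "successor x (Suc n) = next_vertex (Suc n) (x (Suc n))"
    by (simp add: successor_def)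
  show ?thesis
  proof (cases "x n = base")
    case True with False succ show ?thesis by (simp add: successor_def)
  next
    case nonbase: False
    have "(x n, phi n (next_vertex (Suc n) (x (Suc n)))) \<in> E n"
      using phi_next_vertex_edge[OF X_in_V[OF x] False] X_phi[OF x] by simp
    then have "phi n (next_vertex (Suc n) (x (Suc n))) = next_vertex n (x n)"
      using E_from_nonbase[OF nonbase] by simp
    with succ nonbase show ?thesis by (simp add: successor_def)
  qed
next
  case True
  then have "x n = base" using X_phi[OF x, of n] by simp
  show ?thesis
  proof (cases "x (Suc (Suc n)) = base")
    case False
    let ?w = "phi (Suc n) (next_vertex (Suc (Suc n)) (x (Suc (Suc n))))"
    have "(base, ?w) \<in> E (Suc n)"
      using phi_next_vertex_edge[OF X_in_V[OF x] False] X_phi[OF x, of "Suc n"] True by simp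
    moreover have "?w \<in> V (Suc n)"
      using phi_in_V next_vertex_in_V X_in_V[OF x] False by blast
    ultimately show ?thesis
      using phi_after_base True False \<open>x n = base\<close> by (simp add: successor_def)
  qed (simp add: successor_def True \<open>x n = base\<close>)
qed

lemma successor_edge:
  assumes x: "x \<in> X"
  shows "(x n, successor x n) \<in> E n"
proof (cases "x n = base")
  case False
  then show ?thesis using next_vertex_edge[OF X_in_V[OF x] False] by (simp add: successor_def)
next
  case True
  then show ?thesis
    using phi_next_vertex_edge[OF X_in_V[OF x, of "Suc n"]] X_phi[OF x, of n]
    by (cases "x (Suc n) = base") (simp_all add: successor_def)
qed

lemma successor_in_X: "x \<in> X \<Longrightarrow> successor x \<in> X"
  using successor_in_V phi_successor unfolding X_def by blast

lemma successor_unique: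
  assumes x: "x \<in> X" and y: "y \<in> X" and edges: "\<And>n. (x n, y n) \<in> E n"
  shows "y = successor x"
proof
  fix n
  show "y n = successor x n"
  proof (cases "x n = base")
    case False
    then show ?thesis using E_from_nonbase edges by (simp add: successor_def)
  next
    case True
    show ?thesis
    proof (cases "x (Suc n) = base")
      case True
      then have "phi n (y (Suc n)) = base"
        using phi_after_base[OF X_in_V[OF y]] edges by metis
      then show ?thesis using X_phi[OF y, of n] True \<open>x n = base\<close> by (simp add: successor_def)
    next
      case False
      then have "y (Suc n) = next_vertex (Suc n) (x (Suc n))"
        using E_from_nonbase edges by simp
      then show ?thesis using X_phi[OF y, of n] \<open>x n = base\<close> False by (simp add: successor_def)
    qed
  qed
qed

lemma T_eq_successor:
  assumes "x \<in> X"
  shows "T x = successor x"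
  unfolding T_def
proof (rule the_equality)
  show "successor x \<in> X \<and> (\<forall>n. (x n, successor x n) \<in> E n)"
    using assms successor_in_X successor_edge by blast
qed (use assms successor_unique in blast)

lemma orbit_in_X: "x \<in> X \<Longrightarrow> (T ^^ k) x \<in> X"
  by (induction k) (auto simp: T_eq_successor successor_in_X)

lemma orbit_edge: "x \<in> X \<Longrightarrow> ((T ^^ k) x n, (T ^^ Suc k) x n) \<in> E n"
  using orbit_in_X[of x k] by (simp add: T_eq_successor successor_edge)

lemma orbit_in_V: "x \<in> X \<Longrightarrow> (T ^^ k) x n \<in> V n"
  using orbit_in_X X_in_V by blast

lemma orbit_phi: "x \<in> X \<Longrightarrow> phi n ((T ^^ k) x (Suc n)) = (T ^^ k) x n"
  using orbit_in_X X_phi by blast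

section \<open>Proximality\<close>

lemma X_base_below:
  assumes x: "x \<in> X" and "x m = base" "i \<le> m"
  shows "x i = base"
  using assms(3,2)
proof (induction m)
  case (Suc m)
  then show ?case using X_phi[OF x, of m] by (cases "i = Suc m") auto
qed simp

definition total_length :: "nat \<Rightarrow> nat" where
  "total_length n = (\<Sum>i=1..n. lens n i)"

lemma lens_le_total_length: "1 \<le> j \<Longrightarrow> j \<le> n \<Longrightarrow> lens n j \<le> total_length n"
  unfolding total_length_def by (rule member_le_sum) auto

lemma total_length_le_lens_Suc: "total_length n \<le> lens (Suc n) (Suc n)"
  by (simp add: Ppath_Suc_self total_length_def)

lemma nth_Ppath_Suc_self: "t < length (Ppath L n (Suc n)) \<Longrightarrow> Ppath L n (Suc n) ! t = base"
  unfolding Ppath_Suc_self by (simp only: length_replicate nth_replicate)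

lemma orbit_along_cycle:
  assumes x: "x \<in> X" and start: "(T ^^ k) x m = (j, s)" "(j, s) \<noteq> base"
    and "s + t \<le> lens m j"
  shows "(T ^^ (k + t)) x m = cyc (lens m j) j ! (s + t)"
proof -
  have s: "1 \<le> s" "s < lens m j"
    using V_nonbaseE[OF orbit_in_V[OF x, of k m]] start by (metis prod.inject)+
  show ?thesis
    using assms(4)
  proof (induction t)
    case 0
    then show ?case using start s by (simp add: nth_cyc)
  next
    case (Suc t)
    then have "(T ^^ (k + t)) x m = (j, s + t)"
      using s by (simp add: nth_cyc)
    moreover have "(j, s + t) \<noteq> base"
      using s by (simp add: base_def)
    ultimately have "(T ^^ Suc (k + t)) x m = next_vertex m (j, s + t)"
      using E_from_nonbase orbit_edge[OF x, of "k + t" m] by metis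
    then show ?case by (simp add: next_vertex_def)
  qed
qed

lemma orbit_returns_to_base:
  assumes x: "x \<in> X"
  shows "\<exists>t \<le> total_length n. (T ^^ (k + t)) x n = base"
proof (cases "(T ^^ k) x n = base")
  case False
  then obtain j s where js: "(T ^^ k) x n = (j, s)" "1 \<le> j" "j \<le> n" "s < lens n j"
    using V_nonbaseE[OF orbit_in_V[OF x]] by metis
  then have "(T ^^ (k + (lens n j - s))) x n = cyc (lens n j) j ! lens n j"
    using orbit_along_cycle[OF x js(1) _, of "lens n j - s"] False by simp
  then show ?thesis
    using lens_le_total_length[OF js(2,3)] by (intro exI[of _ "lens n j - s"]) (simp add: nth_cyc)
qed (intro exI[of _ 0], simp)

lemma exists_exit_step:
  fixes a b :: nat
  assumes "a \<le> b" "P a" "\<not> P b"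
  shows "\<exists>k\<ge>a. k < b \<and> P k \<and> \<not> P (Suc k)"
  using assms
proof (induction b rule: dec_induct)
  case (step b)
  then show ?case by (cases "P b") (auto intro: less_SucI)
qed simp

lemma orbit_projects_Ppath:
  assumes y: "y \<in> X"
    and at_base: "(T ^^ k) y (Suc l) = base"
    and entry: "(T ^^ Suc k) y (Suc l) = (j, Suc 0)"
    and s: "s \<le> lens (Suc l) j"
  shows "(T ^^ (k + s)) y l = Ppath (lens l) l j ! s"
proof -
  have j: "1 \<le> j"
    using orbit_in_V[OF y, of "Suc k" "Suc l"] entry by (auto simp: V_def base_def)
  have "(T ^^ (k + s)) y (Suc l) = cyc (lens (Suc l) j) j ! s"
  proof (cases s)
    case 0
    then show ?thesis using at_base by (simp add: nth_cyc)
  next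
    case (Suc s')
    then show ?thesis using orbit_along_cycle[OF y entry _, of s'] s by (simp add: base_def)
  qed
  then show ?thesis using orbit_phi[OF y, of l "k + s"] phi_nth_cyc[OF j s] by simp
qed

text \<open>Either P_{n+1,j} = P_{n+1,n+2} is a run of loops longer than S_n, or it traverses
  c_{n+1,n+1}, which phi n maps onto the run of loops P_{n,n+1}.\<close>

lemma Ppath_projects_base_run:
  assumes "1 \<le> j" "j \<le> Suc (Suc n)"
  shows "\<exists>a. a + total_length n \<le> lens (Suc (Suc n)) j \<and>
    (\<forall>t \<le> total_length n. phi n (Ppath (lens (Suc n)) (Suc n) j ! (a + t)) = base)"
proof (cases "j = Suc (Suc n)")
  case True
  have "total_length n \<le> lens (Suc n) (Suc n)" by (rule total_length_le_lens_Suc)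
  also have "\<dots> \<le> total_length (Suc n)" by (rule lens_le_total_length) simp_all
  also have "\<dots> \<le> lens (Suc (Suc n)) j" unfolding True by (rule total_length_le_lens_Suc)
  finally have run: "total_length n \<le> lens (Suc (Suc n)) j" .
  have "phi n (Ppath (lens (Suc n)) (Suc n) j ! t) = base" if "t \<le> total_length n" for t
  proof -
    have "t < length (Ppath (lens (Suc n)) (Suc n) j)"
      using run that True by (simp add: Ppath_Suc_self)
    then show ?thesis using True by (simp add: nth_Ppath_Suc_self)
  qed
  with run show ?thesis by (intro exI[of _ 0]) simp
next
  case False
  let ?P = "Ppath (lens (Suc n)) (Suc n) j"
  let ?L = "lens (Suc n) (Suc n)"
  obtain A B where AB: "?P = A @ cyc ?L (Suc n) @ B"
    using sublist_cyc_Ppath[of j "Suc n" "lens (Suc n)"] assms False by (auto simp: sublist_def)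
  have run: "total_length n \<le> ?L" by (rule total_length_le_lens_Suc)
  have "phi n (?P ! (length A + t)) = base" if "t \<le> total_length n" for t
  proof -
    have "?P ! (length A + t) = cyc ?L (Suc n) ! t"
      using AB that run by (simp add: nth_append)
    moreover have "t < length (Ppath (lens n) n (Suc n))"
      using that run by (simp add: Ppath_Suc_self)
    ultimately show ?thesis
      using phi_nth_cyc[of "Suc n" t n] that run by (simp add: nth_Ppath_Suc_self)
  qed
  moreover have "length A + total_length n \<le> lens (Suc (Suc n)) j"
    using AB run by simp
  ultimately show ?thesis by blast
qed

lemma base_run_after_cycle_entry:
  assumes y: "y \<in> X"
    and at_base: "(T ^^ k) y (Suc (Suc n)) = base"
    and leaves: "(T ^^ Suc k) y (Suc (Suc n)) \<noteq> base"
  shows "\<exists>a\<ge>k. \<forall>t \<le> total_length n. (T ^^ (a + t)) y n = base"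
proof -
  have "(base, (T ^^ Suc k) y (Suc (Suc n))) \<in> E (Suc (Suc n))"
    using orbit_edge[OF y, of k] at_base by metis
  then obtain j where j: "(T ^^ Suc k) y (Suc (Suc n)) = (j, Suc 0)"
    using E_from_base leaves by blast
  then have "1 \<le> j" "j \<le> Suc (Suc n)"
    using orbit_in_V[OF y, of "Suc k" "Suc (Suc n)"] by (auto simp: V_def base_def)
  then obtain a where a: "a + total_length n \<le> lens (Suc (Suc n)) j"
      "\<And>t. t \<le> total_length n \<Longrightarrow> phi n (Ppath (lens (Suc n)) (Suc n) j ! (a + t)) = base"
    using Ppath_projects_base_run by blast
  have "(T ^^ (k + a + t)) y n = base" if "t \<le> total_length n" for t
  proof -
    have "(T ^^ (k + (a + t))) y (Suc n) = Ppath (lens (Suc n)) (Suc n) j ! (a + t)"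
      using orbit_projects_Ppath[OF y at_base j] a(1) that by simp
    then show ?thesis
      using orbit_phi[OF y, of n "k + a + t"] a(2)[OF that] by (simp add: add.assoc)
  qed
  then show ?thesis by (intro exI[of _ "k + a"]) auto
qed

lemma orbit_base_run:
  assumes y: "y \<in> X"
  shows "\<exists>a\<ge>k. \<forall>t \<le> total_length n. (T ^^ (a + t)) y n = base"
proof -
  let ?m = "Suc (Suc n)"
  obtain t where t: "(T ^^ (k + t)) y ?m = base"
    using orbit_returns_to_base[OF y] by blast
  show ?thesis
  proof (cases "\<forall>k' \<ge> k + t. (T ^^ k') y ?m = base")
    case True
    then have "(T ^^ k') y n = base" if "k + t \<le> k'" for k'
      using X_base_below[OF orbit_in_X[OF y], of k' ?m n] that by simp
    then show ?thesis by (intro exI[of _ "k + t"]) auto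
  next
    case False
    then obtain k' where "k + t \<le> k'" "(T ^^ k') y ?m \<noteq> base" by auto
    then obtain k2 where "k + t \<le> k2" "(T ^^ k2) y ?m = base" "(T ^^ Suc k2) y ?m \<noteq> base"
      using exists_exit_step[of "k + t" k' "\<lambda>i. (T ^^ i) y ?m = base"] t by auto
    then show ?thesis
      using base_run_after_cycle_entry[OF y] by (meson add_leE order_trans)
  qed
qed

lemma orbits_meet_at_base:
  assumes x: "x \<in> X" and y: "y \<in> X"
  shows "\<exists>k\<ge>k0. (T ^^ k) x n = base \<and> (T ^^ k) y n = base"
proof -
  obtain a where a: "a \<ge> k0" "\<forall>t \<le> total_length n. (T ^^ (a + t)) y n = base"
    using orbit_base_run[OF y] by blast
  obtain t where "t \<le> total_length n" "(T ^^ (a + t)) x n = base"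
    using orbit_returns_to_base[OF x] by blast
  with a show ?thesis by (intro exI[of _ "a + t"]) auto
qed

lemma d_le_if_agree:
  assumes "\<And>i. i \<le> n \<Longrightarrow> a i = b i"
  shows "d a b \<le> (1/2) ^ Suc n"
proof (cases "a = b")
  case False
  then obtain i where "a i \<noteq> b i" by auto
  then have "a (LEAST i. a i \<noteq> b i) \<noteq> b (LEAST i. a i \<noteq> b i)"
    by (rule LeastI)
  then have "Suc n \<le> (LEAST i. a i \<noteq> b i)"
    using assms not_less_eq_eq by blast
  then have "((1::real)/2) ^ (LEAST i. a i \<noteq> b i) \<le> (1/2) ^ Suc n"
    by (intro power_decreasing) auto
  with False show ?thesis by (simp add: d_def)
qed (simp add: d_def)

lemma orbits_frequently_close:
  assumes x: "x \<in> X" and y: "y \<in> X"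
  shows "\<exists>\<^sub>F k in sequentially. d ((T ^^ k) x) ((T ^^ k) y) \<le> (1/2) ^ Suc n"
  unfolding frequently_sequentially
proof
  fix k0
  obtain k where k: "k \<ge> k0" "(T ^^ k) x n = base" "(T ^^ k) y n = base"
    using orbits_meet_at_base[OF x y] by blast
  then have "(T ^^ k) x i = (T ^^ k) y i" if "i \<le> n" for i
    using X_base_below[OF orbit_in_X[OF x], of k n i] X_base_below[OF orbit_in_X[OF y], of k n i]
      that by simp
  with k show "\<exists>k\<ge>k0. d ((T ^^ k) x) ((T ^^ k) y) \<le> (1/2) ^ Suc n"
    using d_le_if_agree by blast
qed

lemma liminf_eq_0_if_frequently_le:
  fixes f :: "nat \<Rightarrow> real"
  assumes nonneg: "\<And>k. 0 \<le> f k"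
    and small: "\<And>e. 0 < e \<Longrightarrow> \<exists>\<^sub>F k in sequentially. f k \<le> e"
  shows "liminf (\<lambda>k. ereal (f k)) = 0"
proof (rule antisym)
  show "0 \<le> liminf (\<lambda>k. ereal (f k))"
    using nonneg by (intro Liminf_bounded) simp
  show "liminf (\<lambda>k. ereal (f k)) \<le> 0"
  proof (rule ccontr)
    assume "\<not> ?thesis"
    then have "0 < liminf (\<lambda>k. ereal (f k))" by simp
    then obtain r where r: "0 < ereal r" "ereal r < liminf (\<lambda>k. ereal (f k))"
      using ereal_dense2 by blast
    then have "\<forall>\<^sub>F k in sequentially. ereal r < ereal (f k)"
      using le_Liminf_iff[THEN iffD1, OF order_refl, rule_format] by blast
    moreover have "\<exists>\<^sub>F k in sequentially. f k \<le> r"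
      using small r(1) by simp
    ultimately have "\<exists>\<^sub>F k in sequentially. f k \<le> r \<and> ereal r < ereal (f k)"
      by (intro frequently_eventually_frequently)
    then have "\<exists>\<^sub>F k in sequentially. False"
      by (rule frequently_elim1) auto
    then show False by simp
  qed
qed

theorem corollary3p4:
  shows "\<forall>x\<in>X. \<forall>y\<in>X. liminf (\<lambda>k. ereal (d ((T ^^ k) x) ((T ^^ k) y))) = 0"
proof (intro ballI liminf_eq_0_if_frequently_le)
  fix x y and e :: real
  assume x: "x \<in> X" and y: "y \<in> X" and "0 < e"
  then obtain n where "(1/2) ^ n < e"
    using real_arch_pow_inv[of e "1/2"] by auto
  with \<open>0 < e\<close> have bound: "(1/2) ^ Suc n < e" by simp
  show "\<exists>\<^sub>F k in sequentially. d ((T ^^ k) x) ((T ^^ k) y) \<le> e"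
    using orbits_frequently_close[OF x y, of n] by (rule frequently_elim1) (use bound in linarith)
qed (simp add: d_def)

end
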